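(* Let $0<m<L$ and $0<\alpha<2/(L+m)$. If $\delta\in[0,1)$ and \[ \rho \geq \left( 1-\frac{2 \alpha L m}{L+m} + \frac{\alpha \delta^2 (L + m -2 \alpha Lm )}{2- \alpha (L+m)}\right)^{1/2}, \] then there exists $c>0$ such that for every $f \in \mathcal{S}(m,L)$ (with reference point $x_\star$), every sequence $x(k)\in\mathbb{R}^n$ and every error sequence $e(k)\in\mathbb{R}^n$ satisfying, for all $k\ge 0$, \[ x(k+1) = x(k) - \alpha\big(\nabla f(x(k)) + e(k)\big), \qquad |e(k)| \leq \delta\, |\nabla f(x(k))|, \] we have $|x(k)-x_\star| \leq c\, \rho^k\, |x(0)-x_\star|$ for all $k \geq 0$.
   Context: For $0\le m<L$, $\mathcal{S}(m,L)$ denotes the set of $C^1$ functions $f:\mathbb{R}^n\to\mathbb{R}$ for which there is a reference point $x_\star\in\mathbb{R}^n$ such that for every $x\in\mathbb{R}^n$, $\langle m(x-x_\star) - \nabla f(x),\ L(x-x_\star) - \nabla f(x)\rangle \le 0$. The constant $c$ may depend on $m,L,\alpha,\delta,\rho$ but not on $f$, $x$ or $e$. *)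

theory Defs
  imports "HOL-Analysis.Analysis"
begin

definition C1_with_gradient :: "(real^'n \<Rightarrow> real) \<Rightarrow> (real^'n \<Rightarrow> real^'n) \<Rightarrow> bool" where
  "C1_with_gradient f grad \<longleftrightarrow>
     (\<forall>x. (f has_derivative (\<lambda>h. grad x \<bullet> h)) (at x)) \<and> continuous_on UNIV grad"

definition in_S_class :: "real \<Rightarrow> real \<Rightarrow> (real^'n \<Rightarrow> real) \<Rightarrow> (real^'n \<Rightarrow> real^'n) \<Rightarrow> real^'n \<Rightarrow> bool" where
  "in_S_class m L f grad xs \<longleftrightarrow> C1_with_gradient f grad \<and>
     (\<forall>x. (m *\<^sub>R (x - xs) - grad x) \<bullet> (L *\<^sub>R (x - xs) - grad x) \<le> 0)"

end

theory Submission
  imports Defs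
begin

text \<open>Write \<open>y = x - x\<^sub>\<star>\<close> and \<open>g = \<nabla>f(x)\<close>. The sector condition gives
  \<open>y \<bullet> g \<ge> (m L |y|\<^sup>2 + |g|\<^sup>2) / (L + m)\<close>, so an exact gradient step satisfies
  \<open>|y - \<alpha> g|\<^sup>2 \<le> c |y|\<^sup>2 - \<alpha> \<theta> |g|\<^sup>2\<close> with \<open>c = 1 - 2 \<alpha> L m / (L + m)\<close> and
  \<open>\<theta> = 2 / (L + m) - \<alpha> > 0\<close>. The error moves the iterate by at most \<open>\<alpha> \<delta> |g|\<close>; after
  Young's inequality with weight \<open>\<theta>\<close> the resulting \<open>|g|\<^sup>2\<close> terms are cancelled exactly by
  the slack \<open>-\<alpha> \<theta> |g|\<^sup>2\<close>, leaving the contraction factor \<open>c (1 + \<alpha> \<delta>\<^sup>2 / \<theta>)\<close>,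
  which is the square of the lower bound on \<open>\<rho>\<close>. Hence every step contracts the
  distance to \<open>x\<^sub>\<star>\<close> by \<open>\<rho>\<close> and one may take \<open>c = 1\<close>.\<close>

definition inexact_gradient_rate_sq :: "real \<Rightarrow> real \<Rightarrow> real \<Rightarrow> real \<Rightarrow> real" where
  "inexact_gradient_rate_sq m L \<alpha> \<delta> = 1 - 2 * \<alpha> * L * m / (L + m)
     + \<alpha> * \<delta>\<^sup>2 * (L + m - 2 * \<alpha> * L * m) / (2 - \<alpha> * (L + m))"

lemma inexact_gradient_rate_sq_eq:
  assumes "0 < L + m" "\<alpha> < 2 / (L + m)"
  shows "inexact_gradient_rate_sq m L \<alpha> \<delta>
           = (1 - 2 * \<alpha> * L * m / (L + m)) * (1 + \<alpha> * \<delta>\<^sup>2 / (2 / (L + m) - \<alpha>))"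
proof -
  have "2 - \<alpha> * (L + m) \<noteq> 0"
    using assms by (simp add: field_simps)
  then show ?thesis
    using assms(1) by (simp add: inexact_gradient_rate_sq_def field_simps)
qed

lemma inexact_gradient_rate_sq_nonneg:
  assumes "0 \<le> m" "0 < L" "0 \<le> \<alpha>" "\<alpha> < 2 / (L + m)"
  shows "0 \<le> inexact_gradient_rate_sq m L \<alpha> \<delta>"
proof -
  have Lm: "0 < L + m"
    using assms by simp
  have "\<alpha> * (L + m) * (2 * L * m) \<le> 2 * (2 * L * m)"
    using assms(4) Lm assms(1,2) by (intro mult_right_mono) (simp_all add: field_simps)
  also have "\<dots> \<le> (L + m) * (L + m)"
    using sum_squares_ge_zero[of "L - m" 0] by (simp add: algebra_simps power2_eq_square)
  finally have "(L + m) * (2 * \<alpha> * L * m) \<le> (L + m) * (L + m)"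
    by (simp add: mult_ac)
  then have "2 * \<alpha> * L * m \<le> L + m"
    using Lm by (rule mult_left_le_imp_le)
  then have "2 * \<alpha> * L * m / (L + m) \<le> 1"
    using Lm by simp
  moreover have "0 \<le> \<alpha> * \<delta>\<^sup>2 / (2 / (L + m) - \<alpha>)"
    using assms(3,4) by simp
  ultimately show ?thesis
    by (simp add: inexact_gradient_rate_sq_eq[OF Lm assms(4)])
qed

lemma sector_inner_lower_bound:
  fixes y g :: "'a::real_inner"
  assumes "(m *\<^sub>R y - g) \<bullet> (L *\<^sub>R y - g) \<le> 0" "0 < L + m"
  shows "(m * L * (norm y)\<^sup>2 + (norm g)\<^sup>2) / (L + m) \<le> y \<bullet> g"
proof -
  have "(m *\<^sub>R y - g) \<bullet> (L *\<^sub>R y - g) = m * L * (norm y)\<^sup>2 - (L + m) * (y \<bullet> g) + (norm g)\<^sup>2"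
    by (simp add: power2_norm_eq_inner algebra_simps inner_commute)
  then have "m * L * (norm y)\<^sup>2 + (norm g)\<^sup>2 \<le> (L + m) * (y \<bullet> g)"
    using assms(1) by linarith
  then show ?thesis
    using assms(2) by (simp add: pos_divide_le_eq mult.commute)
qed

lemma gradient_step_norm_sq_le:
  fixes y g :: "'a::real_inner"
  assumes "(m *\<^sub>R y - g) \<bullet> (L *\<^sub>R y - g) \<le> 0" "0 < L + m" "0 \<le> \<alpha>"
  shows "(norm (y - \<alpha> *\<^sub>R g))\<^sup>2
           \<le> (1 - 2 * \<alpha> * L * m / (L + m)) * (norm y)\<^sup>2 - \<alpha> * (2 / (L + m) - \<alpha>) * (norm g)\<^sup>2"
proof -
  have "(norm (y - \<alpha> *\<^sub>R g))\<^sup>2 = (norm y)\<^sup>2 - 2 * \<alpha> * (y \<bullet> g) + \<alpha>\<^sup>2 * (norm g)\<^sup>2"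
    unfolding power2_norm_eq_inner by (simp add: algebra_simps power2_eq_square inner_commute)
  also have "\<dots> \<le> (norm y)\<^sup>2 - 2 * \<alpha> * ((m * L * (norm y)\<^sup>2 + (norm g)\<^sup>2) / (L + m))
                   + \<alpha>\<^sup>2 * (norm g)\<^sup>2"
    using mult_left_mono[OF sector_inner_lower_bound[OF assms(1,2)], of "2 * \<alpha>"] assms(3)
    by linarith
  also have "\<dots> = (1 - 2 * \<alpha> * L * m / (L + m)) * (norm y)\<^sup>2
                   - \<alpha> * (2 / (L + m) - \<alpha>) * (norm g)\<^sup>2"
    by (simp add: add_divide_distrib diff_divide_distrib algebra_simps power2_eq_square)
  finally show ?thesis .
qed

lemma two_mult_le_weighted_squares:
  fixes u v \<theta> :: real
  assumes "0 < \<theta>"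
  shows "2 * u * v \<le> u\<^sup>2 / \<theta> + \<theta> * v\<^sup>2"
proof -
  have "0 \<le> (u - \<theta> * v)\<^sup>2 / \<theta>"
    using assms by simp
  also have "\<dots> = u\<^sup>2 / \<theta> + \<theta> * v\<^sup>2 - 2 * u * v"
    using assms by (simp add: field_simps power2_eq_square)
  finally show ?thesis
    by simp
qed

lemma inexact_gradient_step_norm_le:
  fixes y g e :: "'a::real_inner"
  assumes sector: "(m *\<^sub>R y - g) \<bullet> (L *\<^sub>R y - g) \<le> 0"
    and Lm: "0 < L + m" and \<alpha>: "0 \<le> \<alpha>" "\<alpha> < 2 / (L + m)"
    and error: "norm e \<le> \<delta> * norm g"
  shows "norm (y - \<alpha> *\<^sub>R (g + e)) \<le> sqrt (inexact_gradient_rate_sq m L \<alpha> \<delta>) * norm y"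
proof -
  define c where "c = 1 - 2 * \<alpha> * L * m / (L + m)"
  define \<theta> where "\<theta> = 2 / (L + m) - \<alpha>"
  define n where "n = norm (y - \<alpha> *\<^sub>R g)"
  have \<theta>: "0 < \<theta>"
    using \<alpha> by (simp add: \<theta>_def)
  have exact: "n\<^sup>2 \<le> c * (norm y)\<^sup>2 - \<alpha> * \<theta> * (norm g)\<^sup>2"
    unfolding n_def c_def \<theta>_def using gradient_step_norm_sq_le[OF sector Lm \<alpha>(1)] .
  have "norm (y - \<alpha> *\<^sub>R (g + e)) \<le> n + \<alpha> * norm e"
    using norm_triangle_ineq4[of "y - \<alpha> *\<^sub>R g" "\<alpha> *\<^sub>R e"] \<alpha>(1)
    by (simp add: n_def algebra_simps)
  also have "\<dots> \<le> n + \<alpha> * \<delta> * norm g"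
    using mult_left_mono[OF error \<alpha>(1)] by (simp add: mult.assoc)
  finally have triangle: "norm (y - \<alpha> *\<^sub>R (g + e)) \<le> n + \<alpha> * \<delta> * norm g" .
  have "(n + \<alpha> * \<delta> * norm g)\<^sup>2 = n\<^sup>2 + \<alpha> * (2 * (\<delta> * n) * norm g) + \<alpha>\<^sup>2 * \<delta>\<^sup>2 * (norm g)\<^sup>2"
    by (simp add: power2_eq_square algebra_simps)
  also have "\<dots> \<le> n\<^sup>2 + \<alpha> * ((\<delta> * n)\<^sup>2 / \<theta> + \<theta> * (norm g)\<^sup>2) + \<alpha>\<^sup>2 * \<delta>\<^sup>2 * (norm g)\<^sup>2"
    using two_mult_le_weighted_squares[OF \<theta>] \<alpha>(1) by (simp add: mult_left_mono)
  also have "\<dots> = (1 + \<alpha> * \<delta>\<^sup>2 / \<theta>) * n\<^sup>2 + \<alpha> * (\<theta> + \<alpha> * \<delta>\<^sup>2) * (norm g)\<^sup>2"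
    by (simp add: power2_eq_square algebra_simps)
  also have "\<dots> \<le> (1 + \<alpha> * \<delta>\<^sup>2 / \<theta>) * (c * (norm y)\<^sup>2 - \<alpha> * \<theta> * (norm g)\<^sup>2)
                   + \<alpha> * (\<theta> + \<alpha> * \<delta>\<^sup>2) * (norm g)\<^sup>2"
    using exact \<theta> \<alpha>(1) by (simp add: mult_left_mono)
  also have "\<dots> = inexact_gradient_rate_sq m L \<alpha> \<delta> * (norm y)\<^sup>2"
    using \<theta> by (simp add: inexact_gradient_rate_sq_eq[OF Lm \<alpha>(2)] c_def \<theta>_def[symmetric]
        field_simps power2_eq_square)
  finally have "(n + \<alpha> * \<delta> * norm g)\<^sup>2 \<le> inexact_gradient_rate_sq m L \<alpha> \<delta> * (norm y)\<^sup>2" .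
  then have "n + \<alpha> * \<delta> * norm g \<le> sqrt (inexact_gradient_rate_sq m L \<alpha> \<delta> * (norm y)\<^sup>2)"
    by (rule real_le_rsqrt)
  also have "\<dots> = sqrt (inexact_gradient_rate_sq m L \<alpha> \<delta>) * norm y"
    by (simp add: real_sqrt_mult)
  finally show ?thesis
    using triangle by linarith
qed

lemma geometric_bound_of_contraction:
  fixes u :: "nat \<Rightarrow> real"
  assumes "0 \<le> \<rho>" "\<And>k. u (Suc k) \<le> \<rho> * u k"
  shows "u k \<le> \<rho> ^ k * u 0"
proof (induction k)
  case 0
  show ?case
    by simp
next
  case (Suc k)
  have "u (Suc k) \<le> \<rho> * u k"
    by (fact assms(2))
  also have "\<dots> \<le> \<rho> * (\<rho> ^ k * u 0)"
    using Suc.IH assms(1) by (rule mult_left_mono)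
  finally show ?case
    by (simp add: mult.assoc)
qed

lemma inexact_gradient_descent_linear_convergence:
  fixes x e :: "nat \<Rightarrow> 'a::real_inner" and grad :: "'a \<Rightarrow> 'a"
  assumes "0 \<le> m" "0 < L" "0 \<le> \<alpha>" "\<alpha> < 2 / (L + m)"
    and sector: "\<And>k. (m *\<^sub>R (x k - xs) - grad (x k)) \<bullet> (L *\<^sub>R (x k - xs) - grad (x k)) \<le> 0"
    and iteration: "\<And>k. x (Suc k) = x k - \<alpha> *\<^sub>R (grad (x k) + e k)"
    and error: "\<And>k. norm (e k) \<le> \<delta> * norm (grad (x k))"
  shows "norm (x k - xs) \<le> sqrt (inexact_gradient_rate_sq m L \<alpha> \<delta>) ^ k * norm (x 0 - xs)"
proof (rule geometric_bound_of_contraction)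
  show "0 \<le> sqrt (inexact_gradient_rate_sq m L \<alpha> \<delta>)"
    using inexact_gradient_rate_sq_nonneg[OF assms(1-4)] by simp
  fix j
  have "0 < L + m"
    using assms(1,2) by simp
  have "norm (x (Suc j) - xs) = norm ((x j - xs) - \<alpha> *\<^sub>R (grad (x j) + e j))"
    by (simp add: iteration algebra_simps)
  also have "\<dots> \<le> sqrt (inexact_gradient_rate_sq m L \<alpha> \<delta>) * norm (x j - xs)"
    by (rule inexact_gradient_step_norm_le[OF sector \<open>0 < L + m\<close> assms(3,4) error])
  finally show "norm (x (Suc j) - xs) \<le> sqrt (inexact_gradient_rate_sq m L \<alpha> \<delta>) * norm (x j - xs)" .
qed

theorem proposition1p2:
  fixes m L \<alpha> \<delta> \<rho> :: real
  assumes "0 < m" "m < L"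
    and "0 < \<alpha>" "\<alpha> < 2 / (L + m)"
    and "0 \<le> \<delta>" "\<delta> < 1"
    and "\<rho> \<ge> sqrt (1 - 2 * \<alpha> * L * m / (L + m)
                 + \<alpha> * \<delta>\<^sup>2 * (L + m - 2 * \<alpha> * L * m) / (2 - \<alpha> * (L + m)))"
  shows "\<exists>c>0. \<forall>(f :: real^'n \<Rightarrow> real) grad xs (x :: nat \<Rightarrow> real^'n) (e :: nat \<Rightarrow> real^'n).
           in_S_class m L f grad xs \<longrightarrow>
           (\<forall>k. x (Suc k) = x k - \<alpha> *\<^sub>R (grad (x k) + e k)) \<longrightarrow>
           (\<forall>k. norm (e k) \<le> \<delta> * norm (grad (x k))) \<longrightarrow>
           (\<forall>k. norm (x k - xs) \<le> c * \<rho> ^ k * norm (x 0 - xs))"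
proof (intro exI[of _ 1] conjI allI impI)
  fix f :: "real^'n \<Rightarrow> real" and grad xs and x e :: "nat \<Rightarrow> real^'n" and k :: nat
  assume "in_S_class m L f grad xs"
    and "\<forall>k. x (Suc k) = x k - \<alpha> *\<^sub>R (grad (x k) + e k)"
    and "\<forall>k. norm (e k) \<le> \<delta> * norm (grad (x k))"
  \<comment> \<open>Only the sector inequality of \<open>in_S_class\<close> is used, and no bound on \<open>\<delta>\<close> is needed.\<close>
  then have "norm (x k - xs) \<le> sqrt (inexact_gradient_rate_sq m L \<alpha> \<delta>) ^ k * norm (x 0 - xs)"
    using assms(1-4) by (intro inexact_gradient_descent_linear_convergence) (auto simp: in_S_class_def)
  also have "\<dots> \<le> \<rho> ^ k * norm (x 0 - xs)"
    using assms(1-4,7) inexact_gradient_rate_sq_nonneg[of m L \<alpha> \<delta>]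
    by (intro mult_right_mono power_mono) (auto simp: inexact_gradient_rate_sq_def)
  finally show "norm (x k - xs) \<le> 1 * \<rho> ^ k * norm (x 0 - xs)"
    by simp
qed simp

end
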